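(* Define $k:[0,1]\times[0,1]\to\mathbb{R}$ by $$k(s,t)=\sum_{j=1}^\infty \frac{(1-s^j)(1-t^j)}{j^2}.$$ Then $k$ is continuous on the whole closed unit square, i.e. $k\in C([0,1]\times[0,1])$. However, the first partial derivative of $k$ with respect to $s$, given for $0\le s<1$ and $0\le t\le 1$ by $\frac{\partial k(s,t)}{\partial s}=\sum_{j=1}^\infty \frac{-s^{j-1}(1-t^j)}{j}$, satisfies $$\lim_{s\to 1}\frac{\partial k(s,t)}{\partial s}=-\infty\quad\text{for every } 0\le t<1,$$ so $\frac{\partial k}{\partial s}$ does not extend to a function in $C([0,1]\times[0,1])$; in particular $k$ is not continuously differentiable on the closed unit square.
   Context: The function $k$ is the kernel of the integral operator $A^*A$ on $L^2(0,1)$, where $A=B^{(H)}\circ J:L^2(0,1)\to\ell^2$, $[Jx](s)=\int_0^s x(t)\,dt$ and $[B^{(H)}z]_j=\int_0^1 t^{j-1}z(t)\,dt$ for $j=1,2,\dots$; this background is not needed for the statement, which concerns only the explicitly defined series $k$. *)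

theory Defs
  imports "HOL-Analysis.Analysis"
begin

definition kser :: "real \<Rightarrow> real \<Rightarrow> real" where
  "kser s t = (\<Sum>n. (1 - s ^ (n+1)) * (1 - t ^ (n+1)) / (real (n+1))^2)"

definition dks :: "real \<Rightarrow> real \<Rightarrow> real" where
  "dks s t = (\<Sum>n. - (s ^ n) * (1 - t ^ (n+1)) / real (n+1))"

end

theory Submission
  imports Defs "HOL-Real_Asymp.Real_Asymp"
begin

text \<open>
  On the closed square the terms of k are bounded by 1/j^2, so k is a uniform limit of
  continuous partial sums. For s < 1 the differentiated terms are dominated by a geometric
  series, so k may be differentiated termwise. Since 1 - t^j \<ge> 1 - t, the derivative
  series is bounded above by (1 - t) times the logarithmic series, i.e. by (1 - t) ln (1 - s),
  which tends to -\<infinity> as s \<rightarrow> 1; a continuous extension of \<partial>k/\<partial>s to the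
  closed square would instead stay bounded along t = 0.
\<close>

lemma summable_inverse_Suc_squared: "summable (\<lambda>n. 1 / (real (n+1))^2)"
  using summable_Suc_iff[where f = "\<lambda>n. inverse ((real n)^2)"] inverse_power_summable[of 2]
  by (simp add: divide_inverse)

lemma abs_one_minus_power_le_one:
  fixes x :: real
  assumes "0 \<le> x" "x \<le> 1"
  shows "\<bar>1 - x^n\<bar> \<le> 1"
  using assms by (simp add: abs_le_iff power_le_one)

lemma divide_Suc_le_self:
  fixes a :: real
  assumes "0 \<le> a"
  shows "a / real (n+1) \<le> a"
  using assms by (simp add: divide_le_eq mult_le_cancel_left1 del: of_nat_Suc)

lemma continuous_on_kser: "continuous_on ({0..1} \<times> {0..1}) (\<lambda>(s, t). kser s t)"
proof -
  define f where "f = (\<lambda>n (p :: real \<times> real).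
    (1 - fst p ^ (n+1)) * (1 - snd p ^ (n+1)) / (real (n+1))^2)"
  have "norm (f n p) \<le> 1 / (real (n+1))^2" if "p \<in> {0..1} \<times> {0..1}" for n p
  proof -
    have "\<bar>1 - fst p ^ (n+1)\<bar> * \<bar>1 - snd p ^ (n+1)\<bar> \<le> 1"
      using that abs_one_minus_power_le_one by (auto intro!: mult_le_one simp del: power_Suc)
    then show ?thesis
      by (simp add: f_def abs_mult divide_right_mono del: power_Suc)
  qed
  then have uniform: "uniform_limit ({0..1} \<times> {0..1}) (\<lambda>n p. \<Sum>i<n. f i p) (\<lambda>p. \<Sum>i. f i p) sequentially"
    by (rule Weierstrass_m_test[OF _ summable_inverse_Suc_squared])
  have "continuous_on ({0..1} \<times> {0..1}) (\<lambda>p. \<Sum>i. f i p)"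
  proof (rule uniform_limit_theorem[OF _ uniform])
    show "\<forall>\<^sub>F n in sequentially. continuous_on ({0..1} \<times> {0..1}) (\<lambda>p. \<Sum>i<n. f i p)"
      unfolding f_def by (intro always_eventually allI continuous_intros) auto
  qed simp
  also have "(\<lambda>p. \<Sum>i. f i p) = (\<lambda>(s, t). kser s t)"
    by (auto simp: f_def kser_def fun_eq_iff)
  finally show ?thesis .
qed

lemma kser_has_real_derivative:
  assumes s: "\<bar>s\<bar> < 1" and t: "0 \<le> t" "t \<le> 1"
  shows "((\<lambda>x. kser x t) has_real_derivative dks s t) (at s)"
proof -
  define r where "r = (1 + \<bar>s\<bar>) / 2"
  have r: "\<bar>s\<bar> < r" "r < 1" using s by (auto simp: r_def)
  define S where "S = {-r<..<r}"
  define f where "f = (\<lambda>n (x::real). (1 - x^(n+1)) * (1 - t^(n+1)) / (real (n+1))^2)"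
  define f' where "f' = (\<lambda>n (x::real). - (x^n) * (1 - t^(n+1)) / real (n+1))"
  have "(f n has_field_derivative f' n x) (at x within S)" for n x
  proof -
    have "((\<lambda>x. (1 - x^(n+1)) * c) has_field_derivative - (real (n+1) * x^n) * c) (at x within S)" for c
      by (intro derivative_eq_intros) auto
    from this[of "(1 - t^(n+1)) / (real (n+1))^2"] show ?thesis
      by (simp add: f_def f'_def power2_eq_square del: of_nat_Suc)
  qed
  moreover have "uniformly_convergent_on S (\<lambda>n x. \<Sum>i<n. f' i x)"
  proof (rule Weierstrass_m_test')
    fix n x assume "x \<in> S"
    then have "\<bar>x\<bar>^n \<le> r^n" by (auto simp: S_def intro: power_mono)
    have "norm (f' n x) = \<bar>x\<bar>^n * \<bar>1 - t^(n+1)\<bar> / real (n+1)"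
      by (simp add: f'_def abs_mult power_abs)
    also have "\<dots> \<le> \<bar>x\<bar>^n * \<bar>1 - t^(n+1)\<bar>"
      by (rule divide_Suc_le_self) simp
    also have "\<dots> \<le> r^n * 1"
      using \<open>\<bar>x\<bar>^n \<le> r^n\<close> abs_one_minus_power_le_one[OF t, of "n+1"] r
      by (intro mult_mono) auto
    finally show "norm (f' n x) \<le> r^n" by simp
  next
    show "summable (\<lambda>n. r^n)" using r by auto
  qed
  moreover have "summable (\<lambda>n. f n 0)"
  proof (rule summable_comparison_test'[OF summable_inverse_Suc_squared])
    show "norm (f n 0) \<le> 1 / (real (n+1))^2" for n
      using abs_one_minus_power_le_one[OF t, of "n+1"]
      by (simp add: f_def abs_mult divide_right_mono del: power_Suc of_nat_Suc)
  qed
  moreover have "convex S" "0 \<in> S" "s \<in> interior S" using r by (auto simp: S_def)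
  ultimately have "((\<lambda>x. \<Sum>n. f n x) has_field_derivative (\<Sum>n. f' n s)) (at s)"
    by (intro has_field_derivative_series'(2)) auto
  moreover have "(\<lambda>x. \<Sum>n. f n x) = (\<lambda>x. kser x t)" "(\<Sum>n. f' n s) = dks s t"
    by (simp_all add: f_def f'_def kser_def dks_def fun_eq_iff)
  ultimately show ?thesis by simp
qed

lemma dks_le_ln:
  assumes s: "0 \<le> s" "s < 1" and t: "0 \<le> t" "t \<le> 1"
  shows "dks s t \<le> (1 - t) * ln (1 - s)"
proof -
  define a where "a = (\<lambda>n. - (s^n) * (1 - t^(n+1)) / real (n+1))"
  define b where "b = (\<lambda>n. (1 - t) * (- (s^(n+1)) / real (n+1)))"
  have "(\<lambda>n. - ((- (-s))^n) / of_nat n) sums ln (1 + - s)"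
    by (rule ln_series') (use s in auto)
  then have "(\<lambda>n. - (s^n) / real n) sums ln (1 - s)"
    by simp
  \<comment> \<open>the shift loses nothing: the term for n = 0 is -1/0 = 0\<close>
  then have "(\<lambda>n. - (s^(n+1)) / real (n+1)) sums ln (1 - s)"
    using sums_Suc_iff[of "\<lambda>n. - (s^n) / real n"] by simp
  then have "b sums ((1 - t) * ln (1 - s))"
    unfolding b_def by (rule sums_mult)
  moreover have "summable a"
  proof (rule summable_comparison_test'[where N = 0])
    show "norm (a n) \<le> s^n" for n
    proof -
      have "norm (a n) = s^n * \<bar>1 - t^(n+1)\<bar> / real (n+1)"
        using s by (simp add: a_def abs_mult)
      also have "\<dots> \<le> s^n * \<bar>1 - t^(n+1)\<bar>"
        by (rule divide_Suc_le_self) (use s in simp)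
      also have "\<dots> \<le> s^n"
        using abs_one_minus_power_le_one[OF t, of "n+1"] s by (simp add: mult_left_le del: power_Suc)
      finally show ?thesis .
    qed
  qed (use s in simp)
  moreover have "a n \<le> b n" for n
  proof -
    have "s^(n+1) \<le> s^n" "t^(n+1) \<le> t"
      using s t power_decreasing[of 1 "n+1" t] by (auto simp: mult_left_le_one_le)
    then have "s^(n+1) * (1 - t) \<le> s^n * (1 - t^(n+1))"
      using s t by (intro mult_mono) auto
    then have "(1 - t) * s^(n+1) / real (n+1) \<le> s^n * (1 - t^(n+1)) / real (n+1)"
      by (simp add: mult.commute divide_right_mono del: power_Suc)
    then show ?thesis
      by (simp add: a_def b_def)
  qed
  ultimately have "suminf a \<le> (1 - t) * ln (1 - s)"
    by (metis sums_summable sums_unique suminf_le)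
  then show ?thesis by (simp add: dks_def a_def)
qed

lemma filterlim_dks_at_bot:
  assumes "0 \<le> t" "t < 1"
  shows "filterlim (\<lambda>s. dks s t) at_bot (at_left 1)"
proof (rule filterlim_at_bot_mono)
  have "filterlim (\<lambda>s::real. 1 - s) (at_right 0) (at_left 1)" by real_asymp
  then have "filterlim (\<lambda>s::real. ln (1 - s)) at_bot (at_left 1)"
    using filterlim_compose[OF ln_at_0] by blast
  then show "filterlim (\<lambda>s. (1 - t) * ln (1 - s)) at_bot (at_left 1)"
    using assms by (intro filterlim_tendsto_pos_mult_at_bot[OF tendsto_const]) auto
  show "\<forall>\<^sub>F s in at_left 1. dks s t \<le> (1 - t) * ln (1 - s)"
    using eventually_at_left_real[OF zero_less_one] by eventually_elim (use assms dks_le_ln in auto)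
qed

lemma not_filterlim_at_bot_if_continuous_extension:
  fixes f g :: "real \<Rightarrow> real"
  assumes "continuous_on {a..b} g" "a < b" "\<And>x. x \<in> {a..<b} \<Longrightarrow> g x = f x"
  shows "\<not> filterlim f at_bot (at_left b)"
proof
  assume "filterlim f at_bot (at_left b)"
  moreover have "\<forall>\<^sub>F x in at_left b. f x = g x"
    using eventually_at_left_real[OF \<open>a < b\<close>] by eventually_elim (use assms(3) in auto)
  ultimately have "filterlim g at_infinity (at_left b)"
    using filterlim_cong at_bot_le_at_infinity filterlim_mono by blast
  moreover have "(g \<longlongrightarrow> g b) (at_left b)"
    using assms by (intro continuous_on_Icc_at_leftD) auto
  ultimately show False
    using not_tendsto_and_filterlim_at_infinity trivial_limit_at_left_real by blast
qed

lemma no_continuous_extension_dks: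
  "\<not> (\<exists>g :: real \<times> real \<Rightarrow> real. continuous_on ({0..1} \<times> {0..1}) g
     \<and> (\<forall>s\<in>{0..<1}. \<forall>t\<in>{0..1}. g (s, t) = dks s t))"
proof
  assume "\<exists>g :: real \<times> real \<Rightarrow> real. continuous_on ({0..1} \<times> {0..1}) g
    \<and> (\<forall>s\<in>{0..<1}. \<forall>t\<in>{0..1}. g (s, t) = dks s t)"
  then obtain g :: "real \<times> real \<Rightarrow> real" where g_cont: "continuous_on ({0..1} \<times> {0..1}) g"
    and g: "\<forall>s\<in>{0..<1}. \<forall>t\<in>{0..1}. g (s, t) = dks s t" by blast
  have "continuous_on {0..1} (\<lambda>s. g (s, 0))"
    by (rule continuous_on_compose2[OF g_cont]) (auto intro!: continuous_intros)
  then have "\<not> filterlim (\<lambda>s. dks s 0) at_bot (at_left 1)"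
    using g by (intro not_filterlim_at_bot_if_continuous_extension[where g = "\<lambda>s. g (s, 0)"]) auto
  then show False
    using filterlim_dks_at_bot[of 0] by simp
qed

theorem proposition2:
  shows "continuous_on ({0..1} \<times> {0..1}) (\<lambda>(s, t). kser s t)
    \<and> (\<forall>s\<in>{0..<1}. \<forall>t\<in>{0..1}.
         ((\<lambda>x. kser x t) has_real_derivative dks s t) (at s within {0..1}))
    \<and> (\<forall>t\<in>{0..<1}. filterlim (\<lambda>s. dks s t) at_bot (at_left 1))
    \<and> \<not> (\<exists>g :: real \<times> real \<Rightarrow> real. continuous_on ({0..1} \<times> {0..1}) g
           \<and> (\<forall>s\<in>{0..<1}. \<forall>t\<in>{0..1}. g (s, t) = dks s t))"
  using continuous_on_kser kser_has_real_derivative[THEN has_field_derivative_at_within]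
    filterlim_dks_at_bot no_continuous_extension_dks
  by auto

end
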